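(* Let $m\ge 2$, let $f(t)=t^m-\sum_{s=0}^{m-1}u_{m-s}t^s$ with $u_1,\dots,u_m\in\mathbb{Q}$ have $m$ distinct nonzero roots $\alpha_1,\dots,\alpha_m$, let $\mathbf{x}=(x_0,\dots,x_{m-1})\in\mathbb{Q}^m$ and $M=\sum_{n=0}^{m-1}x_nA^n$ with $A$ the companion matrix of $f$. Then for every $n\ge1$ for which the denominators are nonzero, $$\frac{M^n_{m,m-1}}{M^n_{1,m}}=\frac{M^n_{m,1}}{M^n_{1,2}}=\frac{1}{(-1)^{m-1}\prod_{h=1}^m\alpha_h};$$ in particular these ratios do not depend on $n$.
   Context: The companion matrix $A=(A_{a,b})$ of $f(t)=t^m-\sum_{s=0}^{m-1}u_{m-s}t^s$ is the $m\times m$ matrix with $A_{a+1,a}=1$ for $a=1,\dots,m-1$, last column $(A_{1,m},\dots,A_{m,m})^T=(u_m,u_{m-1},\dots,u_1)^T$, and all other entries $0$. $M^n_{a,b}$ denotes the $(a,b)$-entry of the $n$-th power of $M$. *)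

theory Defs
  imports "Jordan_Normal_Form.Matrix"
begin

text \<open>Companion matrix of f(t) = t^m - (sum over s<m of u_(m-s) t^s), as an m x m
  matrix with 0-based indices: entry (i,j) is the paper's entry (i+1,j+1).\<close>
definition companion :: "nat \<Rightarrow> (nat \<Rightarrow> 'a::comm_ring_1) \<Rightarrow> 'a mat" where
  "companion m u = mat m m (\<lambda>(i,j). if j = m - 1 then u (m - i)
                                     else if i = j + 1 then 1 else 0)"

definition mat_poly_sum :: "nat \<Rightarrow> (nat \<Rightarrow> 'a::comm_ring_1) \<Rightarrow> 'a mat \<Rightarrow> 'a mat" where
  "mat_poly_sum m x A = mat m m (\<lambda>ij. \<Sum>k<m. x k * (A ^\<^sub>m k) $$ ij)"

end

theory Submission
  imports Defs "HOL-Computational_Algebra.Polynomial"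
begin

text \<open>Every matrix M that is a polynomial in the companion matrix A commutes with A, and so
  do its powers P. Comparing the first rows of P A and A P gives P(1,j+1) = u_m P(m,j):
  right multiplication by A shifts columns, while the first row of A is (0,...,0,u_m).
  The ratio is therefore 1/u_m, and u_m = (-1)^(m-1) \<alpha>_1 ... \<alpha>_m is the constant-term
  part of Vieta's formulas.\<close>

lemma monic_poly_eq_prod_roots:
  fixes p :: "'a::idom poly"
  assumes "finite R" "degree p \<le> card R" "coeff p (card R) = 1"
    and "\<And>z. z \<in> R \<Longrightarrow> poly p z = 0"
  shows "p = (\<Prod>r\<in>R. [:-r, 1:])"
proof (rule poly_eqI_degree_lead_coeff[where n = "card R" and A = R])
  have deg: "degree (\<Prod>r\<in>R. [:-r, 1:]) = card R"
    using assms(1) by (subst degree_prod_eq_sum_degree) auto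
  then show "degree (\<Prod>r\<in>R. [:-r, 1:]) \<le> card R"
    by simp
  have "lead_coeff (\<Prod>r\<in>R. [:-r, 1:]) = 1"
    by (simp add: lead_coeff_prod)
  then show "coeff p (card R) = coeff (\<Prod>r\<in>R. [:-r, 1:]) (card R)"
    using assms(3) deg by simp
qed (use assms in \<open>auto simp: poly_prod\<close>)

lemma constant_coeff_eq_prod_roots:
  fixes c :: "nat \<Rightarrow> 'a::idom"
  assumes "finite R" "card R = m" "m \<ge> 1"
    and "\<And>z. z \<in> R \<Longrightarrow> z ^ m - (\<Sum>s<m. c s * z ^ s) = 0"
  shows "c 0 = (-1) ^ (m - 1) * \<Prod>R"
proof -
  define p where "p = monom 1 m - (\<Sum>s<m. monom (c s) s)"
  have "degree (\<Sum>s<m. monom (c s) s) < m"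
    using assms(3) by (intro degree_lessI) (auto simp: coeff_sum)
  then have "degree p \<le> m"
    unfolding p_def by (intro degree_diff_le) (auto simp: degree_monom_le)
  moreover have "coeff p m = 1"
    by (auto simp: p_def coeff_sum)
  moreover have "poly p z = 0" if "z \<in> R" for z
    using assms(4)[OF that] by (simp add: p_def poly_sum poly_monom)
  ultimately have p_eq: "p = (\<Prod>r\<in>R. [:-r, 1:])"
    using assms(1,2) by (intro monic_poly_eq_prod_roots) auto
  have "- c 0 = poly p 0"
    using assms(3) by (simp add: poly_0_coeff_0 p_def coeff_sum)
  also have "\<dots> = (\<Prod>r\<in>R. (-1) * r)"
    by (simp add: p_eq poly_prod)
  also have "\<dots> = (\<Prod>r\<in>R. -1) * \<Prod>R"
    by (rule prod.distrib)
  also have "\<dots> = (-1) ^ m * \<Prod>R"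
    using assms(2) by simp
  finally have "c 0 = - ((-1) ^ m * \<Prod>R)"
    by (metis minus_minus)
  also have "\<dots> = (-1) ^ (m - 1) * \<Prod>R"
    using assms(3) by (cases m) auto
  finally show ?thesis .
qed

lemma pow_mat_commute:
  fixes A B :: "'a::semiring_1 mat"
  assumes "A \<in> carrier_mat n n" "B \<in> carrier_mat n n" "A * B = B * A"
  shows "A ^\<^sub>m k * B = B * A ^\<^sub>m k"
proof -
  interpret semiring "ring_mat TYPE('a) n ()"
    by (rule semiring_mat)
  show ?thesis
    using group_commutes_pow[of A B k] assms pow_mat_ring_pow[OF assms(1), of k "()"]
    by (simp add: ring_mat_def)
qed

lemma mat_lincomb_commute:
  fixes A :: "'a::comm_ring_1 mat"
  assumes A: "A \<in> carrier_mat n n"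
    and B: "\<And>k. k \<in> K \<Longrightarrow> B k \<in> carrier_mat n n" "\<And>k. k \<in> K \<Longrightarrow> B k * A = A * B k"
  shows "mat n n (\<lambda>ij. \<Sum>k\<in>K. x k * B k $$ ij) * A = A * mat n n (\<lambda>ij. \<Sum>k\<in>K. x k * B k $$ ij)"
    (is "?M * A = A * ?M")
proof (rule eq_matI)
  fix i j assume "i < dim_row (A * ?M)" "j < dim_col (A * ?M)"
  then have ij: "i < n" "j < n"
    using A by auto
  have BA: "(B k * A) $$ (i, j) = (\<Sum>l<n. B k $$ (i, l) * A $$ (l, j))"
    and AB: "(A * B k) $$ (i, j) = (\<Sum>l<n. A $$ (i, l) * B k $$ (l, j))" if "k \<in> K" for k
    using A B(1)[OF that] ij by (simp_all add: scalar_prod_def lessThan_atLeast0)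
  have "(?M * A) $$ (i, j) = (\<Sum>l<n. \<Sum>k\<in>K. x k * B k $$ (i, l) * A $$ (l, j))"
    using A ij by (simp add: scalar_prod_def lessThan_atLeast0 sum_distrib_right)
  also have "\<dots> = (\<Sum>k\<in>K. x k * (B k * A) $$ (i, j))"
    by (subst sum.swap) (simp add: BA sum_distrib_left mult.assoc)
  also have "\<dots> = (\<Sum>k\<in>K. x k * (A * B k) $$ (i, j))"
    using B(2) by simp
  also have "\<dots> = (\<Sum>l<n. \<Sum>k\<in>K. A $$ (i, l) * (x k * B k $$ (l, j)))"
    by (subst sum.swap) (simp add: AB sum_distrib_left mult_ac)
  also have "\<dots> = (A * ?M) $$ (i, j)"
    using A ij by (simp add: scalar_prod_def lessThan_atLeast0 sum_distrib_left)
  finally show "(?M * A) $$ (i, j) = (A * ?M) $$ (i, j)" .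
qed (use A in auto)

lemma mat_poly_sum_commute:
  fixes A :: "'a::comm_ring_1 mat"
  assumes "A \<in> carrier_mat m m"
  shows "mat_poly_sum m x A * A = A * mat_poly_sum m x A"
  unfolding mat_poly_sum_def
  using assms pow_mat_commute[OF assms assms refl] by (intro mat_lincomb_commute) auto

lemma companion_carrier_mat: "companion m u \<in> carrier_mat m m"
  by (simp add: companion_def)

lemma mult_companion_entry:
  assumes "P \<in> carrier_mat n m" "i < n" "j + 1 < m"
  shows "(P * companion m u) $$ (i, j) = P $$ (i, j + 1)"
proof -
  have "(P * companion m u) $$ (i, j) = (\<Sum>l<m. P $$ (i, l) * companion m u $$ (l, j))"
    using assms by (simp add: companion_def scalar_prod_def lessThan_atLeast0)
  also have "\<dots> = (\<Sum>l<m. if l = j + 1 then P $$ (i, l) else 0)"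
    using assms(3) by (intro sum.cong) (auto simp: companion_def)
  finally show ?thesis
    using assms(3) by simp
qed

lemma companion_mult_entry:
  assumes "P \<in> carrier_mat m n" "j < n" "m \<ge> 2"
  shows "(companion m u * P) $$ (0, j) = u m * P $$ (m - 1, j)"
proof -
  have "(companion m u * P) $$ (0, j) = (\<Sum>l<m. companion m u $$ (0, l) * P $$ (l, j))"
    using assms by (simp add: companion_def scalar_prod_def lessThan_atLeast0)
  also have "\<dots> = (\<Sum>l<m. if l = m - 1 then u m * P $$ (l, j) else 0)"
    using assms(3) by (intro sum.cong) (auto simp: companion_def)
  finally show ?thesis
    using assms(3) by simp
qed

lemma companion_commute_entry:
  assumes "P \<in> carrier_mat m m" "P * companion m u = companion m u * P" "j + 1 < m"
  shows "P $$ (0, j + 1) = u m * P $$ (m - 1, j)"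
proof -
  have "P $$ (0, j + 1) = (P * companion m u) $$ (0, j)"
    using assms(1,3) by (simp add: mult_companion_entry)
  also have "\<dots> = u m * P $$ (m - 1, j)"
    using assms by (simp add: companion_mult_entry)
  finally show ?thesis .
qed

lemma mat_poly_sum_companion_pow_entry:
  assumes "j + 1 < m"
  shows "(mat_poly_sum m x (companion m u) ^\<^sub>m n) $$ (0, j + 1)
           = u m * (mat_poly_sum m x (companion m u) ^\<^sub>m n) $$ (m - 1, j)"
proof (rule companion_commute_entry[OF _ _ assms])
  have M: "mat_poly_sum m x (companion m u) \<in> carrier_mat m m"
    by (simp add: mat_poly_sum_def)
  then show "mat_poly_sum m x (companion m u) ^\<^sub>m n \<in> carrier_mat m m"
    by simp
  show "mat_poly_sum m x (companion m u) ^\<^sub>m n * companion m u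
          = companion m u * mat_poly_sum m x (companion m u) ^\<^sub>m n"
    using M companion_carrier_mat mat_poly_sum_commute[OF companion_carrier_mat]
    by (rule pow_mat_commute)
qed

theorem mainTheorem3:
  fixes m :: nat and u x :: "nat \<Rightarrow> rat" and \<alpha> :: "nat \<Rightarrow> complex"
  assumes m2: "m \<ge> 2"
    and roots: "\<And>h. h \<in> {1..m} \<Longrightarrow>
                  (\<alpha> h) ^ m - (\<Sum>s<m. of_rat (u (m - s)) * (\<alpha> h) ^ s) = 0"
    and distinct: "inj_on \<alpha> {1..m}"
    and nonzero: "\<And>h. h \<in> {1..m} \<Longrightarrow> \<alpha> h \<noteq> 0"
  shows "\<forall>n\<ge>1. let P = mat_poly_sum m x (companion m u) ^\<^sub>m n;
                    c = 1 / ((-1) ^ (m - 1) * (\<Prod>h=1..m. \<alpha> h)) in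
           (P $$ (0, m - 1) \<noteq> 0 \<longrightarrow>
              of_rat (P $$ (m - 1, m - 2) / P $$ (0, m - 1)) = c) \<and>
           (P $$ (0, 1) \<noteq> 0 \<longrightarrow>
              of_rat (P $$ (m - 1, 0) / P $$ (0, 1)) = c)"
proof (intro allI impI)
  fix n :: nat
  have "of_rat (u (m - 0)) = (-1) ^ (m - 1) * \<Prod>(\<alpha> ` {1..m})"
  proof (rule constant_coeff_eq_prod_roots)
    show "card (\<alpha> ` {1..m}) = m"
      using card_image[OF distinct] by simp
  qed (use m2 roots in auto)
  then have ratio: "of_rat (b / a) = 1 / ((-1) ^ (m - 1) * (\<Prod>h=1..m. \<alpha> h))"
    if "a = u m * b" "a \<noteq> 0" for a b
    using that prod.reindex[OF distinct, of "\<lambda>z. z"] by (simp add: of_rat_divide)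
  have "P $$ (0, m - 1) = u m * P $$ (m - 1, m - 2)" "P $$ (0, 1) = u m * P $$ (m - 1, 0)"
    if "P = mat_poly_sum m x (companion m u) ^\<^sub>m n" for P
    using that m2 mat_poly_sum_companion_pow_entry[of "m - 2" m x u n]
      mat_poly_sum_companion_pow_entry[of 0 m x u n]
    by (simp_all add: numeral_2_eq_2 Suc_diff_Suc)
  then show "let P = mat_poly_sum m x (companion m u) ^\<^sub>m n;
                 c = 1 / ((-1) ^ (m - 1) * (\<Prod>h=1..m. \<alpha> h)) in
        (P $$ (0, m - 1) \<noteq> 0 \<longrightarrow> of_rat (P $$ (m - 1, m - 2) / P $$ (0, m - 1)) = c) \<and>
        (P $$ (0, 1) \<noteq> 0 \<longrightarrow> of_rat (P $$ (m - 1, 0) / P $$ (0, 1)) = c)"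
    unfolding Let_def using ratio by blast
qed

end
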